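(* Let $\Gamma$ be a finite undirected simple graph which is a disjoint union $\Gamma=\bigsqcup_{i=1}^k\Gamma^{(i)}$ of graphs, the vertices of $\Gamma^{(i)}$ being $x^{(i)}_1,\dots,x^{(i)}_{n^{(i)}}$, and let $y_1,\dots,y_N$ be the commutator generators of $G_\Gamma$. Let $z^{(i)}_j,t_l\in\mathbb{Z}$ be such that there exist $i_1\neq i_2$ and indices $j_1,j_2$ with $z^{(i_1)}_{j_1}\neq0$ and $z^{(i_2)}_{j_2}\neq0$. Then \[Z_{G_\Gamma}\Big(\prod_i\prod_j (x^{(i)}_j)^{z^{(i)}_j}\prod_{l=1}^N y_l^{t_l}\Big)=\Big\langle\prod_i\prod_j (x^{(i)}_j)^{z^{(i)}_j/d}\Big\rangle\times\gamma_2(G_\Gamma)\cong\mathbb{Z}^{N+1},\] where $d=\gcd_{i,j}z^{(i)}_j$ and $Z_{G_\Gamma}$ denotes the centralizer.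
   Context: For a finite undirected simple graph $\Gamma$ with vertex set $\{x_1,\dots,x_n\}$ and edge set $E$, the group $G_\Gamma$ is defined by the presentation with generators $x_1,\dots,x_n$ and $y_{i,j}$ for each pair $i<j$ with $x_ix_j\notin E$, and relations $[x_j,x_i]=1$ if $x_ix_j\in E$; $[x_j,x_i]=y_{i,j}$ if $x_ix_j\notin E$ and $i<j$; and $[x_l,y_{i,j}]=1$ for all $l$ and all such $y_{i,j}$. $N$ is the number of non-adjacent pairs and the $y_{i,j}$ are enumerated $y_1,\dots,y_N$; they generate $\gamma_2(G_\Gamma)=[G_\Gamma,G_\Gamma]\cong\mathbb{Z}^N$. The disjoint union of graphs has as vertex and edge sets the disjoint unions of those of the pieces. The products $\prod_i\prod_j$ are taken in a fixed order of the vertices. *)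

theory Defs
  imports "HOL-Algebra.Algebra"
begin

text \<open>Graph on vertex set {0..<n} (vertex v stands for x_(v+1)); E symmetric, irreflexive.
  The non-adjacent pairs (i,j), i<j, index the commutator generators y_(i,j).\<close>

definition nonadj :: "nat \<Rightarrow> (nat \<Rightarrow> nat \<Rightarrow> bool) \<Rightarrow> (nat \<times> nat) set" where
  "nonadj n E = {(i, j). i < j \<and> j < n \<and> \<not> E i j}"

definition nonadj_list :: "nat \<Rightarrow> (nat \<Rightarrow> nat \<Rightarrow> bool) \<Rightarrow> (nat \<times> nat) list" where
  "nonadj_list n E = [(i, j). i \<leftarrow> [0..<n], j \<leftarrow> [0..<n], i < j \<and> \<not> E i j]"

text \<open>Concrete model of G_Gamma via the normal form
  x_1^(a_1) ... x_n^(a_n) prod y_(i,j)^(c_(i,j)).  Using x_j x_i = x_i x_j y_(i,j) (i<j, non-adjacent),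
  x_j x_i = x_i x_j (adjacent), and centrality of the y's, one gets
  (a,c)(b,e) = (a+b, c+e+w(a,b)) with w(a,b)_(i,j) = a_j * b_i.\<close>
definition GGamma :: "nat \<Rightarrow> (nat \<Rightarrow> nat \<Rightarrow> bool) \<Rightarrow> ((nat \<Rightarrow> int) \<times> (nat \<times> nat \<Rightarrow> int)) monoid" where
  "GGamma n E = \<lparr>
     carrier = {(a, c). (\<forall>v. n \<le> v \<longrightarrow> a v = 0) \<and> (\<forall>p. p \<notin> nonadj n E \<longrightarrow> c p = 0)},
     monoid.mult = (\<lambda>(a, c) (b, e).
        (\<lambda>v. a v + b v,
         \<lambda>p. c p + e p + (if p \<in> nonadj n E then a (snd p) * b (fst p) else 0))),
     one = (\<lambda>_. 0, \<lambda>_. 0) \<rparr>"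

definition xgen :: "nat \<Rightarrow> (nat \<Rightarrow> int) \<times> (nat \<times> nat \<Rightarrow> int)" where
  "xgen v = ((\<lambda>u. if u = v then 1 else 0), (\<lambda>_. 0))"

definition ygen :: "nat \<times> nat \<Rightarrow> (nat \<Rightarrow> int) \<times> (nat \<times> nat \<Rightarrow> int)" where
  "ygen p = ((\<lambda>_. 0), (\<lambda>q. if q = p then 1 else 0))"

definition lprod :: "('a, 'b) monoid_scheme \<Rightarrow> 'a list \<Rightarrow> 'a" where
  "lprod G xs = foldr (\<lambda>g acc. g \<otimes>\<^bsub>G\<^esub> acc) xs \<one>\<^bsub>G\<^esub>"

definition centralizer :: "('a, 'b) monoid_scheme \<Rightarrow> 'a \<Rightarrow> 'a set" where
  "centralizer G g = {x \<in> carrier G. x \<otimes>\<^bsub>G\<^esub> g = g \<otimes>\<^bsub>G\<^esub> x}"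

end

theory Submission
  imports Defs
begin

text \<open>
  In the normal-form model, \<open>G\<^sub>\<Gamma>\<close> is \<open>\<int>\<^sup>n \<times> \<int>\<^sup>N\<close> with the product
  \<open>(a, c) (b, e) = (a + b, c + e + \<beta>(a, b))\<close> for the bilinear cocycle \<open>\<beta>(a, b)\<^sub>i\<^sub>j = a\<^sub>j b\<^sub>i\<close>
  on non-adjacent pairs \<open>i < j\<close>, and \<open>\<gamma>\<^sub>2\<close> is the kernel \<open>a = 0\<close> of the projection to \<open>\<int>\<^sup>n\<close>.
  Two elements with first coordinates \<open>a\<close> and \<open>b\<close> commute iff \<open>\<beta>(a, b) = \<beta>(b, a)\<close>,
  i.e. iff \<open>b\<^sub>u a\<^sub>v = b\<^sub>v a\<^sub>u\<close> for all distinct non-adjacent \<open>u, v\<close>. Since \<open>a\<close> is nonzero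
  on two components, two adjacent vertices have a common non-neighbour \<open>w\<close> with \<open>a\<^sub>w \<noteq> 0\<close>, so
  the relation holds for all pairs: \<open>b\<close> is proportional to \<open>a\<close>, hence an integer multiple of
  the primitive vector \<open>a / d\<close>. The centralizer is therefore the preimage of \<open>\<int> (a / d)\<close>, which
  splits as \<open>\<langle>h\<rangle> \<times> \<gamma>\<^sub>2 \<cong> \<int> \<times> \<int>\<^sup>N\<close>.
\<close>

section \<open>The group law\<close>

definition cocycle :: "nat \<Rightarrow> (nat \<Rightarrow> nat \<Rightarrow> bool) \<Rightarrow> (nat \<Rightarrow> int) \<Rightarrow> (nat \<Rightarrow> int) \<Rightarrow> nat \<times> nat \<Rightarrow> int" where
  "cocycle n E a b = (\<lambda>p. if p \<in> nonadj n E then a (snd p) * b (fst p) else 0)"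

lemma GGamma_mult [simp]:
  "(a, c) \<otimes>\<^bsub>GGamma n E\<^esub> (b, e) = (\<lambda>v. a v + b v, \<lambda>p. c p + e p + cocycle n E a b p)"
  by (simp add: GGamma_def cocycle_def)

lemma GGamma_one [simp]: "\<one>\<^bsub>GGamma n E\<^esub> = (\<lambda>_. 0, \<lambda>_. 0)"
  by (simp add: GGamma_def)

lemma GGamma_carrier:
  "(a, c) \<in> carrier (GGamma n E) \<longleftrightarrow> (\<forall>v. n \<le> v \<longrightarrow> a v = 0) \<and> (\<forall>p. p \<notin> nonadj n E \<longrightarrow> c p = 0)"
  by (simp add: GGamma_def)

lemma cocycle_outside_nonadj: "p \<notin> nonadj n E \<Longrightarrow> cocycle n E a b p = 0"
  by (simp add: cocycle_def)

lemma cocycle_add_left: "cocycle n E (\<lambda>v. a v + b v) c = (\<lambda>p. cocycle n E a c p + cocycle n E b c p)"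
  and cocycle_add_right: "cocycle n E c (\<lambda>v. a v + b v) = (\<lambda>p. cocycle n E c a p + cocycle n E c b p)"
  and cocycle_uminus_left: "cocycle n E (\<lambda>v. - a v) b = (\<lambda>p. - cocycle n E a b p)"
  and cocycle_scale_left: "cocycle n E (\<lambda>v. k * a v) b = (\<lambda>p. k * cocycle n E a b p)"
  and cocycle_scale_right: "cocycle n E b (\<lambda>v. k * a v) = (\<lambda>p. k * cocycle n E b a p)"
  by (auto simp: cocycle_def fun_eq_iff algebra_simps)

lemma cocycle_zero_left [simp]: "cocycle n E (\<lambda>_. 0) b = (\<lambda>_. 0)"
  and cocycle_zero_right [simp]: "cocycle n E b (\<lambda>_. 0) = (\<lambda>_. 0)"
  by (auto simp: cocycle_def fun_eq_iff)

lemma group_GGamma: "group (GGamma n E)"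
proof (rule groupI)
  fix x y assume "x \<in> carrier (GGamma n E)" "y \<in> carrier (GGamma n E)"
  then show "x \<otimes>\<^bsub>GGamma n E\<^esub> y \<in> carrier (GGamma n E)"
    by (cases x; cases y) (auto simp: GGamma_carrier cocycle_outside_nonadj)
next
  fix x y z :: "(nat \<Rightarrow> int) \<times> (nat \<times> nat \<Rightarrow> int)"
  show "x \<otimes>\<^bsub>GGamma n E\<^esub> y \<otimes>\<^bsub>GGamma n E\<^esub> z = x \<otimes>\<^bsub>GGamma n E\<^esub> (y \<otimes>\<^bsub>GGamma n E\<^esub> z)"
    by (cases x; cases y; cases z) (simp add: cocycle_add_left cocycle_add_right algebra_simps)
next
  fix x :: "(nat \<Rightarrow> int) \<times> (nat \<times> nat \<Rightarrow> int)"
  show "\<one>\<^bsub>GGamma n E\<^esub> \<otimes>\<^bsub>GGamma n E\<^esub> x = x"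
    by (cases x) simp
next
  fix x assume x: "x \<in> carrier (GGamma n E)"
  obtain a c where x_eq: "x = (a, c)" by fastforce
  let ?y = "(\<lambda>v. - a v, \<lambda>p. - c p + cocycle n E a a p)"
  have "?y \<in> carrier (GGamma n E)" "?y \<otimes>\<^bsub>GGamma n E\<^esub> x = \<one>\<^bsub>GGamma n E\<^esub>"
    using x by (auto simp: x_eq GGamma_carrier cocycle_outside_nonadj cocycle_uminus_left)
  then show "\<exists>y\<in>carrier (GGamma n E). y \<otimes>\<^bsub>GGamma n E\<^esub> x = \<one>\<^bsub>GGamma n E\<^esub>" by blast
qed (simp add: GGamma_carrier)

lemma GGamma_inv:
  assumes "(a, c) \<in> carrier (GGamma n E)"
  shows "inv\<^bsub>GGamma n E\<^esub> (a, c) = (\<lambda>v. - a v, \<lambda>p. - c p + cocycle n E a a p)"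
  by (rule group.inv_equality[OF group_GGamma])
    (use assms in \<open>auto simp: GGamma_carrier cocycle_outside_nonadj cocycle_uminus_left\<close>)

lemma GGamma_commute_iff:
  "(a, c) \<otimes>\<^bsub>GGamma n E\<^esub> (b, e) = (b, e) \<otimes>\<^bsub>GGamma n E\<^esub> (a, c) \<longleftrightarrow> cocycle n E a b = cocycle n E b a"
  by (simp add: fun_eq_iff algebra_simps)

lemma GGamma_central:
  "(\<lambda>_. 0, e) \<otimes>\<^bsub>GGamma n E\<^esub> x = x \<otimes>\<^bsub>GGamma n E\<^esub> (\<lambda>_. 0, e)"
  by (cases x) (simp only: GGamma_commute_iff cocycle_zero_left cocycle_zero_right)

lemma fst_GGamma_mult: "fst (x \<otimes>\<^bsub>GGamma n E\<^esub> y) = (\<lambda>v. fst x v + fst y v)"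
  by (cases x; cases y) simp

lemma fst_GGamma_inv: "x \<in> carrier (GGamma n E) \<Longrightarrow> fst (inv\<^bsub>GGamma n E\<^esub> x) = (\<lambda>v. - fst x v)"
  by (cases x) (simp add: GGamma_inv)

lemma fst_GGamma_int_pow:
  assumes "x \<in> carrier (GGamma n E)"
  shows "fst (x [^]\<^bsub>GGamma n E\<^esub> (k::int)) = (\<lambda>v. k * fst x v)"
proof -
  have nat_pow: "fst (x [^]\<^bsub>GGamma n E\<^esub> (m::nat)) = (\<lambda>v. int m * fst x v)" for m
    by (induction m) (simp_all add: fst_GGamma_mult algebra_simps)
  have "x [^]\<^bsub>GGamma n E\<^esub> (m::nat) \<in> carrier (GGamma n E)" for m
    using assms by (rule monoid.nat_pow_closed[OF group.is_monoid[OF group_GGamma]])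
  then show ?thesis
    by (cases "k < 0") (simp_all only: int_pow_def2 if_True if_False fst_GGamma_inv nat_pow, auto)
qed

lemma GGamma_int_pow_coordinatewise:
  assumes "(a, c) \<in> carrier (GGamma n E)" "cocycle n E a a = (\<lambda>_. 0)"
  shows "(a, c) [^]\<^bsub>GGamma n E\<^esub> (k::int) = (\<lambda>v. k * a v, \<lambda>p. k * c p)"
proof -
  let ?f = "\<lambda>k::int. (\<lambda>v. k * a v, \<lambda>p. k * c p)"
  have "?f \<in> hom integer_group (GGamma n E)"
    using assms by (intro homI) (auto simp: GGamma_carrier cocycle_scale_left cocycle_scale_right algebra_simps)
  then have "?f (1 [^]\<^bsub>integer_group\<^esub> k) = ?f 1 [^]\<^bsub>GGamma n E\<^esub> k"
    by (rule hom_int_pow) (simp_all add: group_GGamma)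
  then show ?thesis by simp
qed

section \<open>Generators and normal forms\<close>

lemma xgen_int_pow:
  "v < n \<Longrightarrow> xgen v [^]\<^bsub>GGamma n E\<^esub> (k::int) = (\<lambda>u. if u = v then k else 0, \<lambda>_. 0)"
  unfolding xgen_def
  by (subst GGamma_int_pow_coordinatewise) (auto simp: GGamma_carrier cocycle_def nonadj_def fun_eq_iff)

lemma ygen_int_pow:
  "p \<in> nonadj n E \<Longrightarrow> ygen p [^]\<^bsub>GGamma n E\<^esub> (k::int) = (\<lambda>_. 0, \<lambda>q. if q = p then k else 0)"
  unfolding ygen_def
  by (subst GGamma_int_pow_coordinatewise) (auto simp: GGamma_carrier fun_eq_iff)

text \<open>No cocycle term arises because the vertices are multiplied in increasing order.\<close>

lemma lprod_xgen_powers: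
  assumes "sorted_wrt (<) vs" "set vs \<subseteq> {..<n}"
  shows "lprod (GGamma n E) (map (\<lambda>v. xgen v [^]\<^bsub>GGamma n E\<^esub> (f v :: int)) vs)
           = (\<lambda>u. if u \<in> set vs then f u else 0, \<lambda>_. 0)"
  using assms
proof (induction vs)
  case Nil
  then show ?case by (simp add: lprod_def)
next
  case (Cons v vs)
  then have "cocycle n E (\<lambda>u. if u = v then f v else 0) (\<lambda>u. if u \<in> set vs then f u else 0) = (\<lambda>_. 0)"
    by (fastforce simp: cocycle_def nonadj_def fun_eq_iff)
  with Cons show ?case
    by (auto simp: lprod_def xgen_int_pow fun_eq_iff)
qed

lemma lprod_ygen_powers:
  assumes "distinct ps" "set ps \<subseteq> nonadj n E"
  shows "lprod (GGamma n E) (map (\<lambda>p. ygen p [^]\<^bsub>GGamma n E\<^esub> (f p :: int)) ps)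
           = (\<lambda>_. 0, \<lambda>q. if q \<in> set ps then f q else 0)"
  using assms
  by (induction ps) (auto simp: lprod_def ygen_int_pow fun_eq_iff)

lemma lprod_xgen_powers_upt:
  "lprod (GGamma n E) (map (\<lambda>v. xgen v [^]\<^bsub>GGamma n E\<^esub> (f v :: int)) [0..<n])
     = (\<lambda>v. if v < n then f v else 0, \<lambda>_. 0)"
  by (simp add: lprod_xgen_powers sorted_wrt_upt atLeast0LessThan)

lemma lprod_in_subgroup: "subgroup H G \<Longrightarrow> set xs \<subseteq> H \<Longrightarrow> lprod G xs \<in> H"
  by (induction xs) (auto simp: lprod_def subgroup.one_closed subgroup.m_closed)

lemma nonadj_list_eq_filter_product:
  "nonadj_list n E = filter (\<lambda>(i, j). i < j \<and> \<not> E i j) (List.product [0..<n] [0..<n])"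
proof -
  have "concat (map (\<lambda>j. if i < j \<and> \<not> E i j then [(i, j)] else []) xs)
          = filter (\<lambda>(i, j). i < j \<and> \<not> E i j) (map (Pair i) xs)" for i xs
    by (induction xs) auto
  then show ?thesis
    by (simp add: nonadj_list_def product_concat_map filter_concat comp_def)
qed

lemma set_nonadj_list: "set (nonadj_list n E) = nonadj n E"
  by (auto simp: nonadj_list_eq_filter_product nonadj_def)

lemma distinct_nonadj_list: "distinct (nonadj_list n E)"
  by (simp add: nonadj_list_eq_filter_product distinct_product)

lemma length_nonadj_list: "length (nonadj_list n E) = card (nonadj n E)"
  by (metis distinct_card distinct_nonadj_list set_nonadj_list)

lemma GGamma_normal_form:
  "lprod (GGamma n E) (map (\<lambda>v. xgen v [^]\<^bsub>GGamma n E\<^esub> z v) [0..<n])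
     \<otimes>\<^bsub>GGamma n E\<^esub> lprod (GGamma n E) (map (\<lambda>p. ygen p [^]\<^bsub>GGamma n E\<^esub> t p) (nonadj_list n E))
   = (\<lambda>v. if v < n then z v else 0, \<lambda>p. if p \<in> nonadj n E then t p else 0)"
  by (simp add: lprod_xgen_powers_upt lprod_ygen_powers distinct_nonadj_list set_nonadj_list)

section \<open>The derived subgroup\<close>

lemma subgroup_GGamma_fst_preimage:
  assumes "(\<lambda>_. 0) \<in> A"
    and "\<And>a b. a \<in> A \<Longrightarrow> b \<in> A \<Longrightarrow> (\<lambda>v. a v + b v) \<in> A"
    and "\<And>a. a \<in> A \<Longrightarrow> (\<lambda>v. - a v) \<in> A"
  shows "subgroup {x \<in> carrier (GGamma n E). fst x \<in> A} (GGamma n E)"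
proof (rule group.subgroupI[OF group_GGamma])
  interpret group "GGamma n E" by (rule group_GGamma)
  have "\<one>\<^bsub>GGamma n E\<^esub> \<in> {x \<in> carrier (GGamma n E). fst x \<in> A}"
    using assms(1) by (simp add: GGamma_carrier)
  then show "{x \<in> carrier (GGamma n E). fst x \<in> A} \<noteq> {}" by blast
qed (use assms in \<open>auto simp: fst_GGamma_mult fst_GGamma_inv group.inv_closed[OF group_GGamma]
  monoid.m_closed[OF group.is_monoid[OF group_GGamma]]\<close>)

lemma commutator_xgen:
  assumes "(i, j) \<in> nonadj n E"
  shows "xgen j \<otimes>\<^bsub>GGamma n E\<^esub> xgen i \<otimes>\<^bsub>GGamma n E\<^esub> inv\<^bsub>GGamma n E\<^esub> xgen j \<otimes>\<^bsub>GGamma n E\<^esub> inv\<^bsub>GGamma n E\<^esub> xgen i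
         = ygen (i, j)"
  using assms
  by (auto simp: xgen_def ygen_def GGamma_inv GGamma_carrier nonadj_def cocycle_def fun_eq_iff)

lemma derived_GGamma:
  "derived (GGamma n E) (carrier (GGamma n E)) = {x \<in> carrier (GGamma n E). fst x = (\<lambda>_. 0)}"
  (is "?D = ?K")
proof
  interpret group "GGamma n E" by (rule group_GGamma)
  have K: "subgroup ?K (GGamma n E)"
    using subgroup_GGamma_fst_preimage[of "{\<lambda>_. 0}"] by simp
  have "y \<otimes>\<^bsub>GGamma n E\<^esub> z \<otimes>\<^bsub>GGamma n E\<^esub> inv\<^bsub>GGamma n E\<^esub> y \<otimes>\<^bsub>GGamma n E\<^esub> inv\<^bsub>GGamma n E\<^esub> z \<in> ?K"
    if "y \<in> carrier (GGamma n E)" "z \<in> carrier (GGamma n E)" for y z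
    using that by (simp add: fst_GGamma_mult fst_GGamma_inv)
  then have "derived_set (GGamma n E) (carrier (GGamma n E)) \<subseteq> ?K"
    by (simp add: UN_subset_iff)
  then show "?D \<subseteq> ?K"
    unfolding derived_def by (rule generate_subgroup_incl[OF _ K])
  have D: "subgroup ?D (GGamma n E)" by (rule derived_is_subgroup) simp
  show "?K \<subseteq> ?D"
  proof
    fix x assume "x \<in> ?K"
    then obtain e where x: "x = (\<lambda>_. 0, e)" and e: "\<And>p. p \<notin> nonadj n E \<Longrightarrow> e p = 0"
      by (cases x) (auto simp: GGamma_carrier)
    have "ygen p [^]\<^bsub>GGamma n E\<^esub> e p \<in> ?D" if "p \<in> nonadj n E" for p
    proof -
      obtain i j where p: "p = (i, j)" by fastforce
      have "i < n" "j < n" using that by (auto simp: p nonadj_def)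
      then have "xgen j \<in> carrier (GGamma n E)" "xgen i \<in> carrier (GGamma n E)"
        by (simp_all add: xgen_def GGamma_carrier)
      then have "xgen j \<otimes>\<^bsub>GGamma n E\<^esub> xgen i \<otimes>\<^bsub>GGamma n E\<^esub> inv\<^bsub>GGamma n E\<^esub> xgen j \<otimes>\<^bsub>GGamma n E\<^esub> inv\<^bsub>GGamma n E\<^esub> xgen i
                 \<in> ?D"
        unfolding derived_def by (intro generate.incl) blast
      then have "ygen p \<in> ?D" using that by (simp add: p commutator_xgen)
      then show ?thesis by (rule subgroup_int_pow_closed[OF D])
    qed
    then have "set (map (\<lambda>p. ygen p [^]\<^bsub>GGamma n E\<^esub> e p) (nonadj_list n E)) \<subseteq> ?D"
      by (simp add: set_nonadj_list image_subset_iff)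
    then have "lprod (GGamma n E) (map (\<lambda>p. ygen p [^]\<^bsub>GGamma n E\<^esub> e p) (nonadj_list n E)) \<in> ?D"
      by (rule lprod_in_subgroup[OF D])
    also have "lprod (GGamma n E) (map (\<lambda>p. ygen p [^]\<^bsub>GGamma n E\<^esub> e p) (nonadj_list n E)) = x"
      using e by (auto simp: x lprod_ygen_powers distinct_nonadj_list set_nonadj_list fun_eq_iff)
    finally show "x \<in> ?D" .
  qed
qed

section \<open>The centralizer\<close>

lemma cocycle_commute_iff:
  assumes sym: "\<And>u v. E u v \<Longrightarrow> E v u"
  shows "cocycle n E a b = cocycle n E b a
           \<longleftrightarrow> (\<forall>u<n. \<forall>v<n. u \<noteq> v \<longrightarrow> \<not> E u v \<longrightarrow> a u * b v = a v * b u)"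
    (is "_ \<longleftrightarrow> ?sym_form")
proof -
  have "cocycle n E a b = cocycle n E b a \<longleftrightarrow> (\<forall>(i, j) \<in> nonadj n E. a j * b i = a i * b j)"
    by (auto simp: cocycle_def fun_eq_iff mult.commute)
  also have "\<dots> \<longleftrightarrow> ?sym_form"
  proof
    assume nonadj: "\<forall>(i, j) \<in> nonadj n E. a j * b i = a i * b j"
    show ?sym_form
    proof (intro allI impI)
      fix u v assume "u < n" "v < n" "u \<noteq> v" "\<not> E u v"
      then have "(u, v) \<in> nonadj n E \<or> (v, u) \<in> nonadj n E"
        using sym by (auto simp: nonadj_def)
      then show "a u * b v = a v * b u" using nonadj by auto
    qed
  next
    assume ?sym_form
    show "\<forall>(i, j) \<in> nonadj n E. a j * b i = a i * b j"
    proof (intro ballI, clarify)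
      fix i j assume "(i, j) \<in> nonadj n E"
      then have "j < n" "i < n" "j \<noteq> i" "\<not> E j i"
        using sym by (auto simp: nonadj_def)
      with \<open>?sym_form\<close> show "a j * b i = a i * b j" by blast
    qed
  qed
  finally show ?thesis .
qed

text \<open>Adjacent vertices are handled through a vertex of another component, adjacent to neither.\<close>

lemma proportional_across_components:
  fixes a b :: "nat \<Rightarrow> int" and comp :: "nat \<Rightarrow> nat"
  assumes disj_union: "\<And>u v. u < n \<Longrightarrow> v < n \<Longrightarrow> E u v \<Longrightarrow> comp u = comp v"
    and two: "v1 < n" "v2 < n" "comp v1 \<noteq> comp v2" "a v1 \<noteq> 0" "a v2 \<noteq> 0"
    and nonedge: "\<And>u v. u < n \<Longrightarrow> v < n \<Longrightarrow> u \<noteq> v \<Longrightarrow> \<not> E u v \<Longrightarrow> b u * a v = b v * a u"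
    and uv: "u < n" "v < n"
  shows "b u * a v = b v * a u"
proof (cases "u \<noteq> v \<and> E u v")
  case True
  then have "comp u = comp v" using disj_union uv by blast
  moreover obtain w where w: "w < n" "comp w \<noteq> comp u" "a w \<noteq> 0"
    using two by metis
  ultimately have "b u * a w = b w * a u" "b v * a w = b w * a v"
    using nonedge[OF uv(1) w(1)] nonedge[OF uv(2) w(1)] disj_union[OF uv(1) w(1)] disj_union[OF uv(2) w(1)]
    by auto
  then have "a w * (b u * a v) = a w * (b v * a u)"
    by (metis mult.commute mult.left_commute)
  then show ?thesis using w(3) by simp
next
  case False
  then show ?thesis using nonedge[OF uv] by auto
qed

lemma proportional_imp_multiple_of_primitive:
  fixes a b :: "'a \<Rightarrow> int"
  assumes proportional: "\<And>u v. u \<in> S \<Longrightarrow> v \<in> S \<Longrightarrow> b u * a v = b v * a u"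
    and w: "w \<in> S" "a w \<noteq> 0"
  obtains \<mu> where "\<And>u. u \<in> S \<Longrightarrow> b u = \<mu> * (a u div Gcd (a ` S))"
proof -
  define d where "d = Gcd (a ` S)"
  have "a w dvd Gcd ((*) (b w) ` a ` S)"
  proof (rule Gcd_greatest)
    fix y assume "y \<in> (*) (b w) ` a ` S"
    then obtain u where "u \<in> S" "y = b w * a u" by auto
    then have "y = a w * b u" using proportional[of u w] w(1) by (simp add: mult.commute)
    then show "a w dvd y" by simp
  qed
  then have "a w dvd b w * d"
    by (simp add: Gcd_mult d_def)
  then obtain \<mu> where \<mu>: "b w * d = a w * \<mu>" by (elim dvdE)
  have "b u = \<mu> * (a u div d)" if "u \<in> S" for u
  proof -
    have "b u * a w = b w * d * (a u div d)"
      using proportional[OF that w(1)] that by (simp add: d_def Gcd_dvd mult.assoc)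
    also have "\<dots> = a w * (\<mu> * (a u div d))"
      by (simp only: \<mu> mult.assoc)
    finally have "a w * b u = a w * (\<mu> * (a u div d))"
      by (simp only: mult.commute)
    then show ?thesis using w(2) by simp
  qed
  then show ?thesis using that unfolding d_def by blast
qed

definition cyclic_preimage :: "nat \<Rightarrow> (nat \<Rightarrow> nat \<Rightarrow> bool) \<Rightarrow> (nat \<Rightarrow> int) \<Rightarrow> ((nat \<Rightarrow> int) \<times> (nat \<times> nat \<Rightarrow> int)) set" where
  "cyclic_preimage n E a = {x \<in> carrier (GGamma n E). \<exists>\<mu>. fst x = (\<lambda>v. \<mu> * a v)}"

lemma centralizer_GGamma:
  fixes a :: "nat \<Rightarrow> int" and comp :: "nat \<Rightarrow> nat"
  assumes sym: "\<And>u v. E u v \<Longrightarrow> E v u"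
    and disj_union: "\<And>u v. u < n \<Longrightarrow> v < n \<Longrightarrow> E u v \<Longrightarrow> comp u = comp v"
    and two: "v1 < n" "v2 < n" "comp v1 \<noteq> comp v2" "a v1 \<noteq> 0" "a v2 \<noteq> 0"
    and supp: "\<And>v. n \<le> v \<Longrightarrow> a v = 0"
  shows "centralizer (GGamma n E) (a, c) = cyclic_preimage n E (\<lambda>v. a v div Gcd (a ` {..<n}))"
proof -
  define d where "d = Gcd (a ` {..<n})"
  have a_eq: "a v = d * (a v div d)" for v
    using supp[of v] by (cases "v < n") (simp_all add: d_def Gcd_dvd)
  have commute_iff: "x \<otimes>\<^bsub>GGamma n E\<^esub> (a, c) = (a, c) \<otimes>\<^bsub>GGamma n E\<^esub> x
      \<longleftrightarrow> (\<forall>u<n. \<forall>v<n. u \<noteq> v \<longrightarrow> \<not> E u v \<longrightarrow> fst x u * a v = fst x v * a u)" for x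
    by (cases x) (simp only: GGamma_commute_iff cocycle_commute_iff[OF sym] fst_conv)
  show ?thesis
  proof (intro equalityI subsetI)
    fix x assume x: "x \<in> centralizer (GGamma n E) (a, c)"
    then have carrier: "x \<in> carrier (GGamma n E)" by (simp add: centralizer_def)
    have proportional: "fst x u * a v = fst x v * a u" if "u \<in> {..<n}" "v \<in> {..<n}" for u v
    proof (rule proportional_across_components[where E = E, OF disj_union two])
      show "fst x u' * a v' = fst x v' * a u'" if "u' < n" "v' < n" "u' \<noteq> v'" "\<not> E u' v'" for u' v'
        using x that by (auto simp: centralizer_def commute_iff)
    qed (use that in auto)
    obtain \<mu> where \<mu>: "\<And>u. u < n \<Longrightarrow> fst x u = \<mu> * (a u div d)"
      using proportional_imp_multiple_of_primitive[of "{..<n}" "fst x" a v1, OF proportional] two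
      unfolding d_def by auto
    have "fst x u = \<mu> * (a u div d)" for u
      using \<mu>[of u] carrier supp[of u] by (cases x; cases "u < n") (auto simp: GGamma_carrier)
    then show "x \<in> cyclic_preimage n E (\<lambda>v. a v div Gcd (a ` {..<n}))"
      using carrier by (auto simp: cyclic_preimage_def d_def)
  next
    fix x assume "x \<in> cyclic_preimage n E (\<lambda>v. a v div Gcd (a ` {..<n}))"
    then obtain \<mu> where carrier: "x \<in> carrier (GGamma n E)" and \<mu>: "fst x = (\<lambda>v. \<mu> * (a v div d))"
      by (auto simp: cyclic_preimage_def d_def)
    have "fst x u * a v = fst x v * a u" for u v
      by (subst (1 2) a_eq) (simp add: \<mu>)
    then show "x \<in> centralizer (GGamma n E) (a, c)"
      using carrier by (simp add: centralizer_def commute_iff)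
  qed
qed

section \<open>Structure of the centralizer\<close>

lemma cyclic_preimage_eq_set_mult:
  assumes h: "(a, \<lambda>_. 0) \<in> carrier (GGamma n E)"
  shows "cyclic_preimage n E a
           = generate (GGamma n E) {(a, \<lambda>_. 0)} <#>\<^bsub>GGamma n E\<^esub> derived (GGamma n E) (carrier (GGamma n E))"
proof (intro equalityI subsetI)
  interpret group "GGamma n E" by (rule group_GGamma)
  fix x assume "x \<in> cyclic_preimage n E a"
  then obtain \<mu> where x: "x \<in> carrier (GGamma n E)" "fst x = (\<lambda>v. \<mu> * a v)"
    by (auto simp: cyclic_preimage_def)
  let ?h = "(a, \<lambda>_. 0) [^]\<^bsub>GGamma n E\<^esub> \<mu>"
  have "?h \<in> generate (GGamma n E) {(a, \<lambda>_. 0)}"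
    using h by (auto simp: generate_pow)
  moreover have "inv\<^bsub>GGamma n E\<^esub> ?h \<otimes>\<^bsub>GGamma n E\<^esub> x \<in> derived (GGamma n E) (carrier (GGamma n E))"
    using h x by (simp add: derived_GGamma fst_GGamma_mult fst_GGamma_inv fst_GGamma_int_pow)
  moreover have "x = ?h \<otimes>\<^bsub>GGamma n E\<^esub> (inv\<^bsub>GGamma n E\<^esub> ?h \<otimes>\<^bsub>GGamma n E\<^esub> x)"
    using h x by (simp add: m_assoc[symmetric] del: GGamma_one)
  ultimately show "x \<in> generate (GGamma n E) {(a, \<lambda>_. 0)} <#>\<^bsub>GGamma n E\<^esub> derived (GGamma n E) (carrier (GGamma n E))"
    unfolding set_mult_def by blast
next
  interpret group "GGamma n E" by (rule group_GGamma)
  fix x assume "x \<in> generate (GGamma n E) {(a, \<lambda>_. 0)} <#>\<^bsub>GGamma n E\<^esub> derived (GGamma n E) (carrier (GGamma n E))"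
  then obtain g y where g: "g \<in> generate (GGamma n E) {(a, \<lambda>_. 0)}"
    and y: "y \<in> derived (GGamma n E) (carrier (GGamma n E))" and x: "x = g \<otimes>\<^bsub>GGamma n E\<^esub> y"
    unfolding set_mult_def by blast
  from g obtain k where "g = (a, \<lambda>_. 0) [^]\<^bsub>GGamma n E\<^esub> (k::int)"
    using generate_pow[OF h] by blast
  with h x y show "x \<in> cyclic_preimage n E a"
    by (auto simp: cyclic_preimage_def derived_GGamma fst_GGamma_mult fst_GGamma_int_pow)
qed

lemma generate_inter_derived_GGamma:
  assumes h: "(a, \<lambda>_. 0) \<in> carrier (GGamma n E)" and nonzero: "a w \<noteq> 0"
  shows "generate (GGamma n E) {(a, \<lambda>_. 0)} \<inter> derived (GGamma n E) (carrier (GGamma n E))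
           = {\<one>\<^bsub>GGamma n E\<^esub>}"
proof (intro equalityI subsetI)
  interpret group "GGamma n E" by (rule group_GGamma)
  fix x assume x: "x \<in> generate (GGamma n E) {(a, \<lambda>_. 0)} \<inter> derived (GGamma n E) (carrier (GGamma n E))"
  then obtain k where k: "x = (a, \<lambda>_. 0) [^]\<^bsub>GGamma n E\<^esub> (k::int)"
    using generate_pow[OF h] by blast
  have "(\<lambda>v. k * a v) = fst x"
    using h by (simp add: k fst_GGamma_int_pow)
  also have "\<dots> = (\<lambda>_. 0)"
    using x by (simp add: derived_GGamma)
  finally have "k * a w = 0"
    by (rule fun_cong)
  then show "x \<in> {\<one>\<^bsub>GGamma n E\<^esub>}" using nonzero k by simp
next
  fix x assume "x \<in> {\<one>\<^bsub>GGamma n E\<^esub>}"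
  then show "x \<in> generate (GGamma n E) {(a, \<lambda>_. 0)} \<inter> derived (GGamma n E) (carrier (GGamma n E))"
    using generate.one[of "GGamma n E" "{(a, \<lambda>_. 0)}"] by (simp add: derived_GGamma GGamma_carrier)
qed

definition nonadj_index :: "nat \<Rightarrow> (nat \<Rightarrow> nat \<Rightarrow> bool) \<Rightarrow> nat \<times> nat \<Rightarrow> nat" where
  "nonadj_index n E = inv_into {..<card (nonadj n E)} ((!) (nonadj_list n E))"

lemma bij_betw_nth_nonadj_list: "bij_betw ((!) (nonadj_list n E)) {..<card (nonadj n E)} (nonadj n E)"
  by (rule bij_betw_nth) (simp_all add: distinct_nonadj_list length_nonadj_list set_nonadj_list)

lemma nonadj_index:
  assumes "p \<in> nonadj n E"
  shows "nonadj_index n E p < card (nonadj n E)" "nonadj_list n E ! nonadj_index n E p = p"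
  using bij_betwE[OF bij_betw_inv_into[OF bij_betw_nth_nonadj_list]]
    bij_betw_inv_into_right[OF bij_betw_nth_nonadj_list] assms
  by (auto simp: nonadj_index_def)

lemma nonadj_index_nth:
  assumes "i < card (nonadj n E)"
  shows "nonadj_list n E ! i \<in> nonadj n E" "nonadj_index n E (nonadj_list n E ! i) = i"
  using bij_betwE[OF bij_betw_nth_nonadj_list] bij_betw_inv_into_left[OF bij_betw_nth_nonadj_list] assms
  by (auto simp: nonadj_index_def)

text \<open>Coordinate \<open>i < N\<close> of \<open>\<int>\<^sup>N\<^sup>+\<^sup>1\<close> is the exponent of the \<open>i\<close>-th commutator generator
  in \<open>nonadj_list\<close>, the last coordinate \<open>N\<close> is the exponent of \<open>(a, 0)\<close>.\<close>

definition derived_embedding :: "nat \<Rightarrow> (nat \<Rightarrow> nat \<Rightarrow> bool) \<Rightarrow> (nat \<Rightarrow> int) \<Rightarrow> (nat \<Rightarrow> int) \<times> (nat \<times> nat \<Rightarrow> int)" where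
  "derived_embedding n E F = (\<lambda>_. 0, \<lambda>p. if p \<in> nonadj n E then F (nonadj_index n E p) else 0)"

definition lattice_embedding :: "nat \<Rightarrow> (nat \<Rightarrow> nat \<Rightarrow> bool) \<Rightarrow> (nat \<Rightarrow> int) \<Rightarrow> (nat \<Rightarrow> int) \<Rightarrow> (nat \<Rightarrow> int) \<times> (nat \<times> nat \<Rightarrow> int)" where
  "lattice_embedding n E a F
     = (a, \<lambda>_. 0) [^]\<^bsub>GGamma n E\<^esub> F (card (nonadj n E)) \<otimes>\<^bsub>GGamma n E\<^esub> derived_embedding n E F"

lemma derived_embedding_carrier: "derived_embedding n E F \<in> carrier (GGamma n E)"
  by (simp add: derived_embedding_def GGamma_carrier)

lemma lattice_embedding_carrier:
  "(a, \<lambda>_. 0) \<in> carrier (GGamma n E) \<Longrightarrow> lattice_embedding n E a F \<in> carrier (GGamma n E)"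
  by (simp add: lattice_embedding_def derived_embedding_carrier group.int_pow_closed[OF group_GGamma]
      monoid.m_closed[OF group.is_monoid[OF group_GGamma]])

lemma fst_lattice_embedding:
  "(a, \<lambda>_. 0) \<in> carrier (GGamma n E) \<Longrightarrow> fst (lattice_embedding n E a F) = (\<lambda>v. F (card (nonadj n E)) * a v)"
  by (simp add: lattice_embedding_def derived_embedding_def fst_GGamma_mult fst_GGamma_int_pow)

lemma lattice_embedding_hom:
  assumes h: "(a, \<lambda>_. 0) \<in> carrier (GGamma n E)"
  shows "lattice_embedding n E a \<in> hom (product_group {..<card (nonadj n E) + 1} (\<lambda>_. integer_group)) (GGamma n E)"
proof (rule homI)
  fix F show "lattice_embedding n E a F \<in> carrier (GGamma n E)"
    using h by (rule lattice_embedding_carrier)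
next
  interpret group "GGamma n E" by (rule group_GGamma)
  let ?N = "card (nonadj n E)"
  let ?h = "\<lambda>k. (a, \<lambda>_. 0) [^]\<^bsub>GGamma n E\<^esub> (k::int)"
  let ?Y = "derived_embedding n E"
  fix F F' :: "nat \<Rightarrow> int"
  have sum: "F \<otimes>\<^bsub>product_group {..<?N + 1} (\<lambda>_. integer_group)\<^esub> F' = (\<lambda>i\<in>{..<?N + 1}. F i + F' i)"
    by simp
  have Y_sum: "?Y (\<lambda>i\<in>{..<?N + 1}. F i + F' i) = ?Y F \<otimes>\<^bsub>GGamma n E\<^esub> ?Y F'"
    by (auto simp: derived_embedding_def fun_eq_iff nonadj_index less_SucI)
  have central: "?Y G \<otimes>\<^bsub>GGamma n E\<^esub> g = g \<otimes>\<^bsub>GGamma n E\<^esub> ?Y G" for G g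
    unfolding derived_embedding_def by (rule GGamma_central)
  have "lattice_embedding n E a (\<lambda>i\<in>{..<?N + 1}. F i + F' i)
      = ?h (F ?N) \<otimes>\<^bsub>GGamma n E\<^esub> ?h (F' ?N) \<otimes>\<^bsub>GGamma n E\<^esub> (?Y F \<otimes>\<^bsub>GGamma n E\<^esub> ?Y F')"
    unfolding lattice_embedding_def Y_sum using h by (simp add: int_pow_mult)
  also have "\<dots> = ?h (F ?N) \<otimes>\<^bsub>GGamma n E\<^esub> (?h (F' ?N) \<otimes>\<^bsub>GGamma n E\<^esub> ?Y F) \<otimes>\<^bsub>GGamma n E\<^esub> ?Y F'"
    using h by (simp add: m_assoc derived_embedding_carrier)
  also have "\<dots> = ?h (F ?N) \<otimes>\<^bsub>GGamma n E\<^esub> (?Y F \<otimes>\<^bsub>GGamma n E\<^esub> ?h (F' ?N)) \<otimes>\<^bsub>GGamma n E\<^esub> ?Y F'"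
    by (simp only: central)
  also have "\<dots> = lattice_embedding n E a F \<otimes>\<^bsub>GGamma n E\<^esub> lattice_embedding n E a F'"
    using h by (simp add: lattice_embedding_def m_assoc derived_embedding_carrier)
  finally show "lattice_embedding n E a (F \<otimes>\<^bsub>product_group {..<?N + 1} (\<lambda>_. integer_group)\<^esub> F')
      = lattice_embedding n E a F \<otimes>\<^bsub>GGamma n E\<^esub> lattice_embedding n E a F'"
    by (simp only: sum)
qed

lemma lattice_embedding_inj:
  assumes h: "(a, \<lambda>_. 0) \<in> carrier (GGamma n E)" and nonzero: "a w \<noteq> 0"
  shows "inj_on (lattice_embedding n E a) (carrier (product_group {..<card (nonadj n E) + 1} (\<lambda>_. integer_group)))"
proof (rule inj_onI)
  interpret group "GGamma n E" by (rule group_GGamma)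
  let ?N = "card (nonadj n E)"
  fix F F' assume F: "F \<in> carrier (product_group {..<?N + 1} (\<lambda>_. integer_group))"
    and F': "F' \<in> carrier (product_group {..<?N + 1} (\<lambda>_. integer_group))"
    and eq: "lattice_embedding n E a F = lattice_embedding n E a F'"
  have "(\<lambda>v. F ?N * a v) = (\<lambda>v. F' ?N * a v)"
    using arg_cong[OF eq, of fst] h by (simp add: fst_lattice_embedding)
  then have "F ?N * a w = F' ?N * a w" by (rule fun_cong)
  then have last: "F ?N = F' ?N" using nonzero by simp
  then have "derived_embedding n E F = derived_embedding n E F'"
    using eq h by (simp add: lattice_embedding_def derived_embedding_carrier)
  then have snd_eq: "snd (derived_embedding n E F) p = snd (derived_embedding n E F') p" for p
    by simp
  have derived: "F (nonadj_index n E p) = F' (nonadj_index n E p)" if "p \<in> nonadj n E" for p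
    using snd_eq[of p] that by (simp add: derived_embedding_def)
  show "F = F'"
  proof (rule PiE_ext)
    fix i assume "i \<in> {..<?N + 1}"
    then consider "i < ?N" | "i = ?N" by fastforce
    then show "F i = F' i"
      by cases (use last derived[OF nonadj_index_nth(1)] nonadj_index_nth(2) in metis)+
  qed (use F F' in simp_all)
qed

lemma lattice_embedding_image:
  assumes h: "(a, \<lambda>_. 0) \<in> carrier (GGamma n E)"
  shows "lattice_embedding n E a ` carrier (product_group {..<card (nonadj n E) + 1} (\<lambda>_. integer_group))
           = cyclic_preimage n E a"
proof (intro equalityI subsetI)
  let ?N = "card (nonadj n E)"
  fix x assume "x \<in> lattice_embedding n E a ` carrier (product_group {..<?N + 1} (\<lambda>_. integer_group))"
  then obtain F where "x = lattice_embedding n E a F" by blast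
  moreover have "lattice_embedding n E a F \<in> carrier (GGamma n E)"
    using h by (rule lattice_embedding_carrier)
  ultimately show "x \<in> cyclic_preimage n E a"
    using h by (auto simp: cyclic_preimage_def fst_lattice_embedding)
next
  interpret group "GGamma n E" by (rule group_GGamma)
  let ?N = "card (nonadj n E)"
  fix x assume "x \<in> cyclic_preimage n E a"
  then obtain g e where g: "g \<in> generate (GGamma n E) {(a, \<lambda>_. 0)}"
    and e: "(\<lambda>_. 0, e) \<in> carrier (GGamma n E)" and x: "x = g \<otimes>\<^bsub>GGamma n E\<^esub> (\<lambda>_. 0, e)"
    unfolding cyclic_preimage_eq_set_mult[OF h] set_mult_def derived_GGamma
    by (auto simp del: GGamma_mult)
  from g obtain k where k: "g = (a, \<lambda>_. 0) [^]\<^bsub>GGamma n E\<^esub> (k::int)"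
    using generate_pow[OF h] by blast
  define F where "F = (\<lambda>i\<in>{..<?N + 1}. if i = ?N then k else e (nonadj_list n E ! i))"
  have "F (nonadj_index n E p) = e p" if "p \<in> nonadj n E" for p
    using nonadj_index[OF that] by (simp add: F_def)
  then have "derived_embedding n E F = (\<lambda>_. 0, e)"
    using e by (simp add: derived_embedding_def GGamma_carrier fun_eq_iff)
  then have "lattice_embedding n E a F = x"
    by (simp add: lattice_embedding_def F_def k x)
  moreover have "F \<in> carrier (product_group {..<?N + 1} (\<lambda>_. integer_group))"
    by (simp add: F_def)
  ultimately show "x \<in> lattice_embedding n E a ` carrier (product_group {..<?N + 1} (\<lambda>_. integer_group))"
    by blast
qed

lemma cyclic_preimage_iso:
  assumes h: "(a, \<lambda>_. 0) \<in> carrier (GGamma n E)" and nonzero: "a w \<noteq> 0"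
  shows "subgroup_generated (GGamma n E) (cyclic_preimage n E a)
           \<cong> product_group {..<card (nonadj n E) + 1} (\<lambda>_. integer_group)"
proof -
  let ?P = "product_group {..<card (nonadj n E) + 1} (\<lambda>_. integer_group)"
  have P: "group ?P" by simp
  have "lattice_embedding n E a \<in> mon ?P (GGamma n E)"
    using lattice_embedding_hom[OF h] lattice_embedding_inj[OF h nonzero] by (simp add: mon_def)
  then have "lattice_embedding n E a \<in> iso ?P (subgroup_generated (GGamma n E) (lattice_embedding n E a ` carrier ?P))"
    by (subst group.iso_onto_image[OF P group_GGamma])
  then have "lattice_embedding n E a \<in> iso ?P (subgroup_generated (GGamma n E) (cyclic_preimage n E a))"
    unfolding lattice_embedding_image[OF h] .
  then have "?P \<cong> subgroup_generated (GGamma n E) (cyclic_preimage n E a)"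
    by (rule is_isoI)
  then show ?thesis by (rule group.iso_sym[OF P])
qed

theorem lemma6p1:
  fixes n k :: nat and E :: "nat \<Rightarrow> nat \<Rightarrow> bool" and comp :: "nat \<Rightarrow> nat"
    and z :: "nat \<Rightarrow> int" and t :: "nat \<times> nat \<Rightarrow> int"
  assumes sym: "\<And>u v. E u v \<Longrightarrow> E v u"
    and irrefl: "\<And>v. \<not> E v v"
    and comp_range: "\<And>v. v < n \<Longrightarrow> comp v \<in> {1..k}"
    and disj_union: "\<And>u v. u < n \<Longrightarrow> v < n \<Longrightarrow> E u v \<Longrightarrow> comp u = comp v"
    and two_comps: "\<exists>v1 v2. v1 < n \<and> v2 < n \<and> comp v1 \<noteq> comp v2 \<and> z v1 \<noteq> 0 \<and> z v2 \<noteq> 0"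
  shows
    "let G = GGamma n E;
         g = lprod G (map (\<lambda>v. xgen v [^]\<^bsub>G\<^esub> z v) [0..<n])
             \<otimes>\<^bsub>G\<^esub> lprod G (map (\<lambda>p. ygen p [^]\<^bsub>G\<^esub> t p) (nonadj_list n E));
         d = Gcd (z ` {..<n});
         h = lprod G (map (\<lambda>v. xgen v [^]\<^bsub>G\<^esub> (z v div d)) [0..<n]);
         N = card (nonadj n E)
     in centralizer G g = generate G {h} <#>\<^bsub>G\<^esub> derived G (carrier G)
        \<and> generate G {h} \<inter> derived G (carrier G) = {\<one>\<^bsub>G\<^esub>}
        \<and> subgroup_generated G (centralizer G g) \<cong> product_group {..<N+1} (\<lambda>_. integer_group)"
proof -
  obtain v1 v2 where two: "v1 < n" "v2 < n" "comp v1 \<noteq> comp v2" "z v1 \<noteq> 0" "z v2 \<noteq> 0"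
    using two_comps by blast
  define a where "a = (\<lambda>v. if v < n then z v else 0)"
  define a0 where "a0 = (\<lambda>v. if v < n then z v div Gcd (z ` {..<n}) else 0)"
  have "a ` {..<n} = z ` {..<n}"
    by (rule image_cong) (simp_all add: a_def)
  then have "(\<lambda>v. a v div Gcd (a ` {..<n})) = a0"
    by (simp add: a_def a0_def fun_eq_iff)
  then have "centralizer (GGamma n E) (a, \<lambda>p. if p \<in> nonadj n E then t p else 0) = cyclic_preimage n E a0"
    using centralizer_GGamma[OF sym disj_union two(1-3)] two by (simp add: a_def)
  moreover have h: "(a0, \<lambda>_. 0) \<in> carrier (GGamma n E)"
    by (simp add: a0_def GGamma_carrier)
  moreover have nonzero: "a0 v1 \<noteq> 0"
    using two(1,4) by (simp add: a0_def Gcd_dvd dvd_div_eq_0_iff)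
  ultimately show ?thesis
    unfolding Let_def GGamma_normal_form
    unfolding lprod_xgen_powers_upt a_def[symmetric] a0_def[symmetric]
    using cyclic_preimage_eq_set_mult[OF h] generate_inter_derived_GGamma[OF h nonzero]
      cyclic_preimage_iso[OF h nonzero]
    by simp
qed

end
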